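(* Let $G$ be a group and $f:G\to\mathbb{R}$ a nonzero homogeneous quasimorphism. Then there exist a partial order $\preceq$ on $G$ and a bijection $T:G\to G$ such that $(G,\preceq,T)$ is a quasi-total triple, the action of $G$ on itself by left multiplication is an effective, dominating action by automorphisms of $(G,\preceq,T)$ (so the induced order $\leq$ on $G$ is a special quasi-total order), and $f$ is a multiple of a growth function $\gamma_g$ ($g\in G^{++}$) of $\leq$.
   Context: A quasimorphism is $f:G\to\mathbb{R}$ with $\sup_{h,k}|f(hk)-f(h)-f(k)|<\infty$; homogeneous if $f(h^n)=nf(h)$ for $n\in\mathbb{N}$. For a poset $(X,\preceq)$, an order-preserving bijection $T$ is dominant if for all $a,b$ there is $n\in\mathbb{N}$ with $T^na\succ b$. $(X,\preceq,T)$ is a quasi-total triple if $T$ is a dominant order-preserving bijection and there is $N\in\mathbb{N}$ such that for all $a,b$ some $k\in\{0,\dots,N\}$ satisfies $a\preceq T^kb$ or $b\preceq T^ka$. An action of $G$ by automorphisms on $(X,\preceq,T)$ is by order-preserving bijections commuting with $T$; it is dominating if there exist $g\in G,x\in X,n\in\mathbb{N}$ with $g.x\succeq T^n.x$. For an effective action, the induced order on $G$ is $g\leq h\Leftrightarrow\forall k\in G\,\forall x\in X:(kg).x\preceq(kh).x$; an order induced in this way from an effective dominating action on a quasi-total triple is called a special quasi-total order. For a bi-invariant partial order $\leq$ on $G$: $G^+=\{g\geq e\}$, $G^{++}=\{g\in G^+\setminus\{e\}:\forall h\,\exists n\in\mathbb{N}_0,\ g^n\geq h\}$, and for $g\in G^{++}$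 the growth function is $\gamma_g(h)=\lim_{n\to\infty}\frac1n\inf\{p\in\mathbb{Z}: g^p\geq h^n\}$. *)

theory Defs
  imports Complex_Main
begin

text \<open>Groups are rendered via the type class group_add (not necessarily commutative);
the group operation is written +, the identity 0.\<close>

fun gpow :: "nat \<Rightarrow> 'a::monoid_add \<Rightarrow> 'a" where
  "gpow 0 x = 0"
| "gpow (Suc n) x = x + gpow n x"

definition gpow_int :: "int \<Rightarrow> 'a::group_add \<Rightarrow> 'a" where
  "gpow_int k x = (if 0 \<le> k then gpow (nat k) x else - gpow (nat (- k)) x)"

definition quasimorphism :: "('a::group_add \<Rightarrow> real) \<Rightarrow> bool" where
  "quasimorphism f \<longleftrightarrow> (\<exists>D. \<forall>h k. \<bar>f (h + k) - f h - f k\<bar> \<le> D)"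

definition homogeneous :: "('a::group_add \<Rightarrow> real) \<Rightarrow> bool" where
  "homogeneous f \<longleftrightarrow> (\<forall>h n. f (gpow n h) = real n * f h)"

definition partial_order_rel :: "('x \<Rightarrow> 'x \<Rightarrow> bool) \<Rightarrow> bool" where
  "partial_order_rel le \<longleftrightarrow> (\<forall>a. le a a) \<and> (\<forall>a b c. le a b \<longrightarrow> le b c \<longrightarrow> le a c)
     \<and> (\<forall>a b. le a b \<longrightarrow> le b a \<longrightarrow> a = b)"

definition order_preserving_bij :: "('x \<Rightarrow> 'x \<Rightarrow> bool) \<Rightarrow> ('x \<Rightarrow> 'x) \<Rightarrow> bool" where
  "order_preserving_bij le T \<longleftrightarrow> bij T \<and> (\<forall>a b. le a b \<longrightarrow> le (T a) (T b))"

definition dominant :: "('x \<Rightarrow> 'x \<Rightarrow> bool) \<Rightarrow> ('x \<Rightarrow> 'x) \<Rightarrow> bool" where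
  "dominant le T \<longleftrightarrow> (\<forall>a b. \<exists>n::nat. le b ((T ^^ n) a) \<and> b \<noteq> (T ^^ n) a)"

definition quasi_total_triple :: "('x \<Rightarrow> 'x \<Rightarrow> bool) \<Rightarrow> ('x \<Rightarrow> 'x) \<Rightarrow> bool" where
  "quasi_total_triple le T \<longleftrightarrow> partial_order_rel le \<and> order_preserving_bij le T \<and> dominant le T
     \<and> (\<exists>N::nat. \<forall>a b. \<exists>k\<le>N. le a ((T ^^ k) b) \<or> le b ((T ^^ k) a))"

definition group_action :: "('a::group_add \<Rightarrow> 'x \<Rightarrow> 'x) \<Rightarrow> bool" where
  "group_action act \<longleftrightarrow> act 0 = id \<and> (\<forall>g h. act (g + h) = act g \<circ> act h)"

definition action_by_automorphisms ::
  "('x \<Rightarrow> 'x \<Rightarrow> bool) \<Rightarrow> ('x \<Rightarrow> 'x) \<Rightarrow> ('a::group_add \<Rightarrow> 'x \<Rightarrow> 'x) \<Rightarrow> bool" where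
  "action_by_automorphisms le T act \<longleftrightarrow> group_action act \<and>
     (\<forall>g. order_preserving_bij le (act g) \<and> act g \<circ> T = T \<circ> act g)"

definition effective_action :: "('a::group_add \<Rightarrow> 'x \<Rightarrow> 'x) \<Rightarrow> bool" where
  "effective_action act \<longleftrightarrow> (\<forall>g. act g = id \<longrightarrow> g = 0)"

definition dominating_action ::
  "('x \<Rightarrow> 'x \<Rightarrow> bool) \<Rightarrow> ('x \<Rightarrow> 'x) \<Rightarrow> ('a::group_add \<Rightarrow> 'x \<Rightarrow> 'x) \<Rightarrow> bool" where
  "dominating_action le T act \<longleftrightarrow> (\<exists>g x. \<exists>n::nat. le ((T ^^ n) x) (act g x))"

definition induced_order ::
  "('x \<Rightarrow> 'x \<Rightarrow> bool) \<Rightarrow> ('a::group_add \<Rightarrow> 'x \<Rightarrow> 'x) \<Rightarrow> 'a \<Rightarrow> 'a \<Rightarrow> bool" where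
  "induced_order le act g h \<longleftrightarrow> (\<forall>k x. le (act (k + g) x) (act (k + h) x))"

definition pos_cone :: "('a::group_add \<Rightarrow> 'a \<Rightarrow> bool) \<Rightarrow> 'a set" where
  "pos_cone leq = {g. leq 0 g}"

definition dominant_cone :: "('a::group_add \<Rightarrow> 'a \<Rightarrow> bool) \<Rightarrow> 'a set" where
  "dominant_cone leq = {g \<in> pos_cone leq. g \<noteq> 0 \<and> (\<forall>h. \<exists>n::nat. leq h (gpow n g))}"

definition growth_seq :: "('a::group_add \<Rightarrow> 'a \<Rightarrow> bool) \<Rightarrow> 'a \<Rightarrow> 'a \<Rightarrow> nat \<Rightarrow> real" where
  "growth_seq leq g h n = real_of_int (Inf {p::int. leq (gpow n h) (gpow_int p g)}) / real n"

definition growth_function :: "('a::group_add \<Rightarrow> 'a \<Rightarrow> bool) \<Rightarrow> 'a \<Rightarrow> 'a \<Rightarrow> real" where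
  "growth_function leq g h = lim (growth_seq leq g h)"

end

theory Submission
  imports Defs
begin

text \<open>Let \<open>f\<close> be a homogeneous quasimorphism with defect \<open>D\<close>. Homogeneity makes \<open>f\<close> odd and
conjugation invariant, and \<open>f (-x + y)\<close> differs from \<open>f y - f x\<close> by at most \<open>D\<close>. Declare
\<open>x \<prec> y\<close> when \<open>f (-x + y) \<ge> D + 1\<close>: near-additivity makes this transitive, oddness makes it
antisymmetric, and conjugation invariance makes it invariant under left and right translations, so
the order induced by left multiplication is the relation itself. Right translation by an element
\<open>t\<close> with \<open>f t \<ge> 3 D + 1\<close> is then a dominant automorphism and every two elements are comparable
after one step. Finally \<open>h\<^sup>n \<preceq> t\<^sup>p\<close> forces \<open>n f h \<le> p f t\<close> and is implied by
\<open>p f t \<ge> n f h + 2 D + 1\<close>, so the least such \<open>p\<close> is \<open>n f h / f t + O(1)\<close> and the growth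
function of \<open>t\<close> is \<open>f / f t\<close>.\<close>

lemma gpow_add_commute: "gpow n x + x = x + (gpow n x :: 'a::monoid_add)"
  by (induction n) (simp_all add: add.assoc)

lemma gpow_uminus: "gpow n (-x) = - gpow n (x :: 'a::group_add)"
proof (induction n)
  case (Suc n)
  then have "gpow (Suc n) (-x) = - (gpow n x + x)" by (simp add: minus_add)
  then show ?case by (simp only: gpow_add_commute gpow.simps)
qed simp

lemma gpow_conj: "gpow n (-x + w + x) = -x + gpow n w + (x :: 'a::group_add)"
  by (induction n) (simp_all add: add.assoc)

lemma funpow_add_right: "((\<lambda>y. y + t) ^^ n) a = a + gpow n (t :: 'a::monoid_add)"
  by (induction n) (simp_all add: gpow_add_commute add.assoc)

lemma bij_add_right: "bij (\<lambda>y. y + (t :: 'a::group_add))"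
  by (rule o_bij[of "\<lambda>x. x - t"]) (auto simp: fun_eq_iff)

lemma bij_add_left: "bij (\<lambda>y. (g :: 'a::group_add) + y)"
  by (rule o_bij[of "\<lambda>x. -g + x"]) (auto simp: fun_eq_iff add.assoc[symmetric])

lemma effective_action_add_left: "effective_action (\<lambda>g x::'a::group_add. g + x)"
  unfolding effective_action_def by (metis add.right_neutral id_apply)

lemma zero_if_multiples_bounded:
  fixes y :: real
  assumes "\<And>n::nat. real n * \<bar>y\<bar> \<le> B"
  shows "y = 0"
proof (rule ccontr)
  assume "y \<noteq> 0"
  obtain n :: nat where "B / \<bar>y\<bar> < real n" using reals_Archimedean2 by blast
  with \<open>y \<noteq> 0\<close> have "B < real n * \<bar>y\<bar>" by (simp add: field_simps)
  with assms[of n] show False by simp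
qed

locale homogeneous_quasimorphism =
  fixes f :: "'a::group_add \<Rightarrow> real" and D :: real
  assumes defect_bound: "\<And>h k. \<bar>f (h + k) - f h - f k\<bar> \<le> D"
    and f_gpow: "\<And>n h. f (gpow n h) = real n * f h"
begin

lemma defect_nonneg: "0 \<le> D"
  using defect_bound[of 0 0] by simp

lemma f_zero: "f 0 = 0"
  using f_gpow[of 0] by simp

lemma f_add_ge: "f x + f y - D \<le> f (x + y)"
  using defect_bound[of x y] by simp

text \<open>Homogeneity upgrades an error bounded by a constant to an exact identity: applied to
\<open>h\<^sup>n\<close> the error is \<open>n\<close> times the original one and still bounded.\<close>

lemma f_uminus: "f (-h) = - f h"
proof -
  have "real n * \<bar>f h + f (-h)\<bar> \<le> D" for n
  proof -
    have "gpow n h + gpow n (-h) = 0" by (simp add: gpow_uminus)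
    then have "\<bar>real n * (f h + f (-h))\<bar> \<le> D"
      using defect_bound[of "gpow n h" "gpow n (-h)"] by (simp add: f_gpow f_zero algebra_simps)
    then show ?thesis by (simp add: abs_mult)
  qed
  then have "f h + f (-h) = 0" by (rule zero_if_multiples_bounded)
  then show ?thesis by simp
qed

lemma f_conj: "f (-x + w + x) = f w"
proof -
  have approx: "\<bar>f (-x + b + x) - f b\<bar> \<le> 2 * D" for b
    using defect_bound[of "-x + b" x] defect_bound[of "-x" b] f_uminus[of x] by simp
  have "real n * \<bar>f (-x + w + x) - f w\<bar> \<le> 2 * D" for n
  proof -
    have "f (-x + gpow n w + x) = real n * f (-x + w + x)"
      using f_gpow[of n "-x + w + x"] gpow_conj[of n x w] by simp
    then have "\<bar>real n * (f (-x + w + x) - f w)\<bar> \<le> 2 * D"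
      using approx[of "gpow n w"] by (simp add: f_gpow right_diff_distrib)
    then show ?thesis by (simp add: abs_mult)
  qed
  then have "f (-x + w + x) - f w = 0" by (rule zero_if_multiples_bounded)
  then show ?thesis by simp
qed

lemma f_gpow_int: "f (gpow_int p t) = real_of_int p * f t"
  by (simp add: gpow_int_def f_gpow f_uminus)

lemma exists_f_ge:
  assumes "f \<noteq> (\<lambda>_. 0)"
  shows "\<exists>t. B \<le> f t"
proof -
  obtain h where "f h > 0"
    using assms f_uminus by (metis neg_0_less_iff_less linorder_neqE_linordered_idom)
  moreover obtain n :: nat where "B / f h < real n" using reals_Archimedean2 by blast
  ultimately have "B \<le> f (gpow n h)" by (simp add: f_gpow field_simps)
  then show ?thesis by blast
qed

definition qm_le :: "'a \<Rightarrow> 'a \<Rightarrow> bool" where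
  "qm_le x y \<longleftrightarrow> x = y \<or> D + 1 \<le> f (-x + y)"

lemma qm_le_imp_f_le: "qm_le x y \<Longrightarrow> f x \<le> f y"
  using defect_bound[of "-x" y] f_uminus[of x] defect_nonneg by (auto simp: qm_le_def)

lemma f_ge_imp_qm_le: "f x + 2 * D + 1 \<le> f y \<Longrightarrow> qm_le x y"
  using defect_bound[of "-x" y] f_uminus[of x] unfolding qm_le_def by (simp add: abs_le_iff)

lemma f_ge_imp_qm_less: "f x + 2 * D + 1 \<le> f y \<Longrightarrow> qm_le x y \<and> x \<noteq> y"
  using f_ge_imp_qm_le defect_nonneg by auto

lemma qm_le_translate: "qm_le (k + x + s) (k + y + s) \<longleftrightarrow> qm_le x y"
proof -
  have "-(k + x + s) + (k + y + s) = -s + (-x + y) + s"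
    by (simp only: minus_add add.assoc minus_add_cancel)
  then show ?thesis by (simp add: qm_le_def f_conj)
qed

lemma partial_order_qm_le: "partial_order_rel qm_le"
  unfolding partial_order_rel_def
proof (intro conjI allI impI)
  fix a show "qm_le a a" by (simp add: qm_le_def)
next
  fix a b c assume "qm_le a b" and "qm_le b c"
  moreover have "f (-a + b) + f (-b + c) - D \<le> f (-a + c)"
    using f_add_ge[of "-a + b" "-b + c"] by (simp add: add.assoc)
  ultimately show "qm_le a c"
    using defect_nonneg by (auto simp: qm_le_def)
next
  fix a b assume "qm_le a b" and "qm_le b a"
  moreover have "f (-b + a) = - f (-a + b)"
    using f_uminus[of "-a + b"] by (simp add: minus_add)
  ultimately show "a = b"
    using defect_nonneg by (auto simp: qm_le_def)
qed

lemma order_preserving_bij_add_right: "order_preserving_bij qm_le (\<lambda>y. y + t)"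
  unfolding order_preserving_bij_def
  using bij_add_right qm_le_translate[of 0 _ t] by simp

lemma order_preserving_bij_add_left: "order_preserving_bij qm_le (\<lambda>y. g + y)"
  unfolding order_preserving_bij_def
  using bij_add_left qm_le_translate[of g _ 0] by simp

lemma action_by_automorphisms_add_left:
  "action_by_automorphisms qm_le (\<lambda>y. y + t) (\<lambda>g x. g + x)"
  unfolding action_by_automorphisms_def group_action_def
  using order_preserving_bij_add_left by (simp add: fun_eq_iff add.assoc)

lemma induced_order_add_left: "induced_order qm_le (\<lambda>g x. g + x) = qm_le"
  by (intro ext) (simp add: induced_order_def qm_le_translate)

lemma dominant_add_right:
  assumes "0 < f t"
  shows "dominant qm_le (\<lambda>y. y + t)"
  unfolding dominant_def
proof (intro allI)
  fix a b
  obtain n :: nat where "(f b + 3 * D + 1 - f a) / f t < real n"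
    using reals_Archimedean2 by blast
  with assms have "f b + 2 * D + 1 \<le> f a + f (gpow n t) - D"
    by (simp add: f_gpow field_simps)
  also have "\<dots> \<le> f (a + gpow n t)" by (rule f_add_ge)
  finally show "\<exists>n. qm_le b (((\<lambda>y. y + t) ^^ n) a) \<and> b \<noteq> ((\<lambda>y. y + t) ^^ n) a"
    using f_ge_imp_qm_less by (auto simp: funpow_add_right)
qed

text \<open>Whichever of \<open>a\<close>, \<open>b\<close> has the smaller \<open>f\<close>-value lies below the other one moved by \<open>t\<close>.\<close>

lemma comparable_after_add_right:
  assumes "3 * D + 1 \<le> f t"
  shows "qm_le a (b + t) \<or> qm_le b (a + t)"
proof -
  have "f a + 2 * D + 1 \<le> f (b + t)" if "f a \<le> f b" for a b
    using that assms f_add_ge[of b t] by simp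
  then show ?thesis
    using f_ge_imp_qm_le by (meson linorder_le_cases)
qed

lemma quasi_total_triple_add_right:
  assumes "3 * D + 1 \<le> f t"
  shows "quasi_total_triple qm_le (\<lambda>y. y + t)"
proof -
  have "0 < f t" using assms defect_nonneg by simp
  moreover have "\<forall>a b. \<exists>k\<le>1. qm_le a (((\<lambda>y. y + t) ^^ k) b) \<or> qm_le b (((\<lambda>y. y + t) ^^ k) a)"
    using comparable_after_add_right[OF assms] by (intro allI exI[of _ 1]) simp
  ultimately show ?thesis
    unfolding quasi_total_triple_def
    using partial_order_qm_le order_preserving_bij_add_right dominant_add_right by blast
qed

lemma dominant_cone_qm_le:
  assumes "D + 1 \<le> f t"
  shows "t \<in> dominant_cone qm_le"
  unfolding dominant_cone_def pos_cone_def
proof (intro CollectI conjI allI)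
  show "qm_le 0 t" using assms by (simp add: qm_le_def)
  show "t \<noteq> 0" using assms defect_nonneg f_zero by auto
next
  fix h
  obtain n :: nat where "(f h + 2 * D + 1) / f t < real n"
    using reals_Archimedean2 by blast
  with assms defect_nonneg have "f h + 2 * D + 1 \<le> f (gpow n t)"
    by (simp add: f_gpow field_simps)
  then show "\<exists>n. qm_le h (gpow n t)" using f_ge_imp_qm_le by blast
qed

lemma growth_index_bounds:
  fixes n :: nat and h t :: 'a
  assumes "0 < f t"
  defines "S \<equiv> {p::int. qm_le (gpow n h) (gpow_int p t)}"
  shows "real n * f h / f t \<le> real_of_int (Inf S)"
    and "real_of_int (Inf S) \<le> (real n * f h + 2 * D + 1) / f t + 1"
proof -
  have lower: "\<lceil>real n * f h / f t\<rceil> \<le> p" if "p \<in> S" for p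
  proof -
    have "real n * f h \<le> real_of_int p * f t"
      using that qm_le_imp_f_le[of "gpow n h" "gpow_int p t"]
      by (simp add: S_def f_gpow f_gpow_int)
    with assms(1) show ?thesis by (simp add: ceiling_le_iff field_simps)
  qed
  define p1 where "p1 = \<lceil>(real n * f h + 2 * D + 1) / f t\<rceil>"
  have "(real n * f h + 2 * D + 1) / f t \<le> real_of_int p1"
    unfolding p1_def by (rule le_of_int_ceiling)
  then have "real n * f h + 2 * D + 1 \<le> real_of_int p1 * f t"
    using assms(1) by (simp add: field_simps)
  then have "p1 \<in> S"
    using f_ge_imp_qm_le by (simp add: S_def f_gpow f_gpow_int)
  have "\<lceil>real n * f h / f t\<rceil> \<le> Inf S"
    using \<open>p1 \<in> S\<close> lower by (intro cInf_greatest) auto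
  then show "real n * f h / f t \<le> real_of_int (Inf S)"
    by (meson ceiling_le_iff)
  have "Inf S \<le> p1"
    using \<open>p1 \<in> S\<close> lower by (intro cInf_lower) (auto simp: bdd_below_def)
  then show "real_of_int (Inf S) \<le> (real n * f h + 2 * D + 1) / f t + 1"
    unfolding p1_def by linarith
qed

lemma growth_seq_qm_le:
  assumes "0 < f t"
  shows "growth_seq qm_le t h \<longlonglongrightarrow> f h / f t"
proof (rule tendsto_sandwich[OF _ _ tendsto_const])
  define K where "K = (2 * D + 1) / f t + 1"
  have bounds: "f h / f t \<le> growth_seq qm_le t h n \<and> growth_seq qm_le t h n \<le> f h / f t + K / real n"
    if "n \<ge> 1" for n
  proof -
    have "real n > 0" using that by simp
    with growth_index_bounds[OF assms, of n h] assms show ?thesis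
      unfolding growth_seq_def K_def by (simp add: field_simps)
  qed
  then show "\<forall>\<^sub>F n in sequentially. f h / f t \<le> growth_seq qm_le t h n"
    and "\<forall>\<^sub>F n in sequentially. growth_seq qm_le t h n \<le> f h / f t + K / real n"
    by (auto simp: eventually_sequentially)
  have "(\<lambda>n. f h / f t + K / real n) \<longlonglongrightarrow> f h / f t + 0"
    by (intro tendsto_intros)
  then show "(\<lambda>n. f h / f t + K / real n) \<longlonglongrightarrow> f h / f t" by simp
qed

end

theorem proposition1p8:
  fixes f :: "'a::group_add \<Rightarrow> real"
  assumes "quasimorphism f" and "homogeneous f" and "f \<noteq> (\<lambda>_. 0)"
  shows "\<exists>(le :: 'a \<Rightarrow> 'a \<Rightarrow> bool) (T :: 'a \<Rightarrow> 'a).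
           quasi_total_triple le T
         \<and> action_by_automorphisms le T (\<lambda>g x. g + x)
         \<and> effective_action (\<lambda>g x::'a. g + x)
         \<and> dominating_action le T (\<lambda>g x. g + x)
         \<and> (\<exists>g \<in> dominant_cone (induced_order le (\<lambda>g x. g + x)).
              (\<forall>h. convergent (growth_seq (induced_order le (\<lambda>g x. g + x)) g h))
            \<and> (\<exists>c::real. \<forall>h. f h = c * growth_function (induced_order le (\<lambda>g x. g + x)) g h))"
proof -
  obtain D where "\<And>h k. \<bar>f (h + k) - f h - f k\<bar> \<le> D"
    using assms(1) unfolding quasimorphism_def by blast
  then interpret homogeneous_quasimorphism f D
    using assms(2) unfolding homogeneous_def by unfold_locales auto
  obtain t where t: "3 * D + 1 \<le> f t" using exists_f_ge assms(3) by blast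
  then have "0 < f t" "D + 1 \<le> f t" using defect_nonneg by simp_all
  have "dominating_action qm_le (\<lambda>y. y + t) (\<lambda>g x. g + x)"
    unfolding dominating_action_def by (metis add_0 funpow_0 qm_le_def)
  moreover have "f h = f t * growth_function qm_le t h" for h
    using limI[OF growth_seq_qm_le[OF \<open>0 < f t\<close>]] \<open>0 < f t\<close>
    unfolding growth_function_def by simp
  ultimately show ?thesis
    unfolding convergent_def
    using quasi_total_triple_add_right[OF t] action_by_automorphisms_add_left
      effective_action_add_left dominant_cone_qm_le[OF \<open>D + 1 \<le> f t\<close>]
      growth_seq_qm_le[OF \<open>0 < f t\<close>] induced_order_add_left
    by metis
qed

end
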